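(* Let $h(z)=\frac{1}{2\pi}\big(1+\mathrm{erf}(\sqrt2\,z)\big)$ for $z\in\mathbb C$, where $\mathrm{erf}$ is the (entire) error function, and for $(x_1,y_1),(x_2,y_2)\in\mathbb R^2$ define $$\rho^{T}\big((x_1,y_1),(x_2,y_2)\big)=-e^{-(x_1-x_2)^2-(y_1-y_2)^2}\,\Big|h\Big(\tfrac12\big(y_1+y_2-i(x_1-x_2)\big)\Big)\Big|^2$$ (the truncated two-point correlation of the edge scaled complex Ginibre ensemble). Then, with $\beta=2$, the edge dipole moment sum rule holds: $$-2\pi\beta\int_{-\infty}^{\infty}dy\,\bigg(\int_{-\infty}^{\infty}dy'\,(y'-y)\int_{-\infty}^{\infty}dx'\,\rho^{T}\big((0,y),(x',y')\big)\bigg)=1,$$ where the integrations are performed in the order: first over $x'$, then over $y'$, then over $y$.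
   Context: The order of the $y$ and $y'$ integrations cannot be interchanged. *)

theory Defs
  imports "HOL-Analysis.Analysis"
begin

definition cerf :: "complex \<Rightarrow> complex" where
  "cerf z = (2 / complex_of_real (sqrt pi)) *
     (\<Sum>n. (-1) ^ n * z ^ (2 * n + 1) / (fact n * of_nat (2 * n + 1)))"

definition ginibre_h :: "complex \<Rightarrow> complex" where
  "ginibre_h z = (1 + cerf (complex_of_real (sqrt 2) * z)) / complex_of_real (2 * pi)"

definition rhoT :: "real \<times> real \<Rightarrow> real \<times> real \<Rightarrow> real" where
  "rhoT p q = (case p of (x1, y1) \<Rightarrow> case q of (x2, y2) \<Rightarrow>
     - exp (- (x1 - x2)\<^sup>2 - (y1 - y2)\<^sup>2) *
       (cmod (ginibre_h ((complex_of_real (y1 + y2) - \<i> * complex_of_real (x1 - x2)) / 2)))\<^sup>2)"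

end

theory Submission
  imports Defs "HOL-Probability.Probability" "HOL-Real_Asymp.Real_Asymp"
begin

(* Since 1 + erf c = 2 / sqrt pi * (integral of exp (- (t - c)^2) over t > 0), the correlation is
   rhoT ((0, y), (x, y')) = - exp (- (y - y')^2) / pi^3 * |F psi (sqrt 2 * x)|^2,
   where psi t = exp (- (t - a)^2) for t > 0 and psi t = 0 otherwise is a half Gaussian centred at
   a = (y + y') / sqrt 2 and F is the Fourier transform.  Plancherel's theorem turns the
   x'-integral into a multiple of exp (- (y - y')^2) times the integral of psi^2; exchanging the
   y'- and t-integrations, the y'-integral becomes a Gaussian first moment, and what remains is
   - sqrt 2 / (4 pi^(3/2)) * exp (- 2 y^2), whose integral over y is - 1 / (4 pi).
   Plancherel's theorem is proved for bounded, integrable, almost everywhere continuous functions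
   by damping the frequencies with a Gaussian weight and letting the weight tend to 1. *)

section \<open>Exchanging the order of integration\<close>

lemma (in pair_sigma_finite) Fubini_integral_iterated:
  fixes f :: "_ \<Rightarrow> _ \<Rightarrow> _ :: {banach, second_countable_topology}"
  assumes [measurable]: "(\<lambda>(x, y). f x y) \<in> borel_measurable (M1 \<Otimes>\<^sub>M M2)"
    and "AE x in M1. integrable M2 (f x)"
    and "integrable M1 (\<lambda>x. \<integral>y. norm (f x y) \<partial>M2)"
  shows "(\<integral>x. (\<integral>y. f x y \<partial>M2) \<partial>M1) = (\<integral>y. (\<integral>x. f x y \<partial>M1) \<partial>M2)"
proof -
  have "integrable (M1 \<Otimes>\<^sub>M M2) (\<lambda>(x, y). f x y)"
    by (rule Fubini_integrable) (use assms in auto)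
  from Fubini_integral[OF this] show ?thesis by simp
qed

lemma (in pair_sigma_finite) Fubini_integral_product_bound:
  fixes f :: "_ \<Rightarrow> _ \<Rightarrow> _ :: {banach, second_countable_topology}"
  assumes f_meas[measurable]: "(\<lambda>(x, y). f x y) \<in> borel_measurable (M1 \<Otimes>\<^sub>M M2)"
    and g: "integrable M1 g" and h: "integrable M2 h"
    and bound: "\<And>x y. norm (f x y) \<le> g x * h y"
  shows "(\<integral>x. (\<integral>y. f x y \<partial>M2) \<partial>M1) = (\<integral>y. (\<integral>x. f x y \<partial>M1) \<partial>M2)"
proof (rule Fubini_integral_iterated)
  have integrable: "integrable M2 (f x)" if "x \<in> space M1" for x
  proof (rule Bochner_Integration.integrable_bound)
    show "integrable M2 (\<lambda>y. g x * h y)" using h by simp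
    show "AE y in M2. norm (f x y) \<le> norm (g x * h y)"
      using bound by (auto intro!: AE_I2 intro: order_trans[OF _ abs_ge_self])
  qed (insert that, measurable)
  then show "AE x in M1. integrable M2 (f x)" by (rule AE_I2)
  show "integrable M1 (\<lambda>x. \<integral>y. norm (f x y) \<partial>M2)"
  proof (rule Bochner_Integration.integrable_bound[OF integrable_mult_left[OF g]])
    show "AE x in M1. norm (\<integral>y. norm (f x y) \<partial>M2) \<le> norm (g x * (\<integral>y. h y \<partial>M2))"
    proof (intro AE_I2)
      fix x assume "x \<in> space M1"
      have "(\<integral>y. norm (f x y) \<partial>M2) \<le> (\<integral>y. g x * h y \<partial>M2)"
        by (rule Bochner_Integration.integral_mono) (use integrable[OF \<open>x \<in> space M1\<close>] h bound in auto)
      also have "\<dots> \<le> norm (g x * (\<integral>y. h y \<partial>M2))"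
        by simp
      finally show "norm (\<integral>y. norm (f x y) \<partial>M2) \<le> norm (g x * (\<integral>y. h y \<partial>M2))"
        by simp
    qed
  qed measurable
qed (fact f_meas)

section \<open>Gaussian integrals\<close>

lemma gaussian_eq_normal_density:
  fixes e m x :: real
  assumes "0 < e"
  shows "exp (- e * (x - m)\<^sup>2) = sqrt (pi / e) * normal_density m (1 / sqrt (2 * e)) x"
  using assms by (simp add: normal_density_def power_divide real_sqrt_divide real_sqrt_mult field_simps)

lemma integrable_gaussian:
  fixes e m :: real
  shows "0 < e \<Longrightarrow> integrable lborel (\<lambda>x. exp (- e * (x - m)\<^sup>2))"
  unfolding gaussian_eq_normal_density by simp

lemma integral_gaussian:
  fixes e m :: real
  shows "0 < e \<Longrightarrow> (LBINT x. exp (- e * (x - m)\<^sup>2)) = sqrt (pi / e)"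
  unfolding gaussian_eq_normal_density by simp

lemma integral_gaussian_first_moment:
  fixes e m y :: real
  assumes "0 < e"
  shows "(LBINT x. (x - y) * exp (- e * (x - m)\<^sup>2)) = sqrt (pi / e) * (m - y)"
proof -
  define \<sigma> where "\<sigma> = 1 / sqrt (2 * e)"
  have \<sigma>: "0 < \<sigma>" using assms by (simp add: \<sigma>_def)
  have "(x - y) * exp (- e * (x - m)\<^sup>2) =
      sqrt (pi / e) * (normal_density m \<sigma> x * x - y * normal_density m \<sigma> x)" for x
    unfolding gaussian_eq_normal_density[OF assms] \<sigma>_def by (simp add: algebra_simps)
  then have "(LBINT x. (x - y) * exp (- e * (x - m)\<^sup>2)) =
      sqrt (pi / e) * (LBINT x. normal_density m \<sigma> x * x - y * normal_density m \<sigma> x)"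
    by simp
  also have "(LBINT x. normal_density m \<sigma> x * x - y * normal_density m \<sigma> x) = m - y"
    by (subst Bochner_Integration.integral_diff)
      (auto simp: \<sigma> integrable_normal_moment_nz_1 integral_normal_moment_nz_1)
  finally show ?thesis .
qed

lemma integrable_gaussian_abs_moment: "integrable lborel (\<lambda>x::real. \<bar>x - m\<bar> * exp (- (x - m)\<^sup>2))"
proof -
  have "integrable lborel (\<lambda>x. sqrt pi * (normal_density m (1 / sqrt 2) x * \<bar>x - m\<bar> ^ 1))"
    by (intro integrable_mult_right integrable_normal_moment_abs) auto
  then show ?thesis
    using gaussian_eq_normal_density[of 1 x m for x] by (simp add: mult_ac)
qed

lemma integral_half_line_gaussian_moment:
  fixes m :: real
  shows "(LBINT t:{0<..}. (t - m) * exp (- (t - m)\<^sup>2)) = exp (- m\<^sup>2) / 2"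
proof -
  define f where "f t = (t - m) * exp (- (t - m)\<^sup>2)" for t :: real
  define F where "F t = - (1 / 2) * exp (- (t - m)\<^sup>2)" for t :: real
  have "integrable lborel f"
    by (rule Bochner_Integration.integrable_bound[OF integrable_gaussian_abs_moment[of m]])
       (unfold f_def, measurable, auto simp: abs_mult)
  moreover have einterval: "einterval 0 \<infinity> = {0::real<..}"
    by (auto simp: einterval_def zero_ereal_def)
  ultimately have "set_integrable lborel (einterval 0 \<infinity>) f"
    unfolding set_integrable_def by (intro integrable_mult_indicator) auto
  then have "(LBINT t=0..\<infinity>. f t) = 0 - F 0"
  proof (rule interval_integral_FTC_integrable[rotated 3])
    show "(F has_vector_derivative f t) (at t)" for t
    proof -
      have "(F has_real_derivative - (1 / 2) * (exp (- (t - m)\<^sup>2) * - (2 * (t - m)))) (at t)"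
        unfolding F_def by (rule derivative_eq_intros refl | simp)+
      then show ?thesis
        by (simp add: f_def has_real_derivative_iff_has_vector_derivative algebra_simps)
    qed
    show "((F \<circ> real_of_ereal) \<longlongrightarrow> F 0) (at_right 0)"
      unfolding zero_ereal_def ereal_tendsto_simps F_def by (intro tendsto_eq_intros) auto
    show "((F \<circ> real_of_ereal) \<longlongrightarrow> 0) (at_left \<infinity>)"
      unfolding ereal_tendsto_simps F_def by real_asymp
  qed (auto simp: f_def[abs_def] intro!: continuous_intros)
  then show ?thesis
    by (simp add: interval_lebesgue_integral_0_infty F_def f_def)
qed

section \<open>Fourier transform and Plancherel's theorem\<close>

definition fourier :: "(real \<Rightarrow> real) \<Rightarrow> real \<Rightarrow> complex" where
  "fourier f \<omega> = (CLBINT t. complex_of_real (f t) * cis (\<omega> * t))"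

definition gauss_kernel :: "real \<Rightarrow> real \<Rightarrow> real" where
  "gauss_kernel s d = 2 * sqrt pi / s * exp (- (d / s)\<^sup>2)"

lemma fourier_gaussian:
  fixes s d :: real
  assumes "0 < s"
  shows "fourier (\<lambda>\<omega>. exp (- (s * \<omega> / 2)\<^sup>2)) d = complex_of_real (gauss_kernel s d)"
proof -
  define c where "c = s / sqrt 2"
  have c: "0 < c" using assms by (simp add: c_def)
  have "complex_of_real (exp (- (d / c)\<^sup>2 / 2)) = char std_normal_distribution (d / c)"
    by (simp add: char_std_normal_distribution)
  also have "\<dots> = (CLBINT x. std_normal_density x *\<^sub>R cis (d / c * x))"
    unfolding char_def by (subst integral_density) (auto simp: cis_conv_exp)
  also have "\<dots> = c *\<^sub>R (CLBINT \<omega>. std_normal_density (0 + c * \<omega>) *\<^sub>R cis (d / c * (0 + c * \<omega>)))"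
    using c by (subst lborel_integral_real_affine[where t = 0 and c = c]) auto
  also have "\<dots> = complex_of_real (c / sqrt (2 * pi)) * fourier (\<lambda>\<omega>. exp (- (s * \<omega> / 2)\<^sup>2)) d"
  proof -
    have "std_normal_density (c * \<omega>) = exp (- (s * \<omega> / 2)\<^sup>2) / sqrt (2 * pi)" for \<omega>
      by (simp add: normal_density_def c_def power_mult_distrib power_divide)
    then show ?thesis
      using c by (simp add: fourier_def scaleR_conv_of_real mult_ac)
  qed
  finally have "complex_of_real (exp (- (d / c)\<^sup>2 / 2)) =
      complex_of_real (c / sqrt (2 * pi)) * fourier (\<lambda>\<omega>. exp (- (s * \<omega> / 2)\<^sup>2)) d" .
  moreover have "- (d / c)\<^sup>2 / 2 = - (d / s)\<^sup>2" and "c / sqrt (2 * pi) = inverse (2 * sqrt pi / s)"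
    by (simp_all add: c_def power_divide power_mult_distrib real_sqrt_mult)
  ultimately have "complex_of_real (exp (- (d / s)\<^sup>2)) =
      complex_of_real (inverse (2 * sqrt pi / s)) * fourier (\<lambda>\<omega>. exp (- (s * \<omega> / 2)\<^sup>2)) d"
    by simp
  then show ?thesis
    using assms by (simp add: gauss_kernel_def field_simps del: of_real_mult add: of_real_mult[symmetric])
qed

lemma borel_measurable_cis[measurable]: "cis \<in> borel_measurable borel"
  by (intro borel_measurable_continuous_onI continuous_intros)

lemma borel_measurable_cnj[measurable]: "cnj \<in> borel_measurable borel"
  by (intro borel_measurable_continuous_onI continuous_intros)

lemma borel_measurable_fourier[measurable]:
  assumes [measurable]: "f \<in> borel_measurable borel"
  shows "fourier f \<in> borel_measurable borel"
  unfolding fourier_def by measurable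

lemma norm_fourier_le: "norm (fourier f \<omega>) \<le> (LBINT t. \<bar>f t\<bar>)"
proof -
  have "norm (fourier f \<omega>) \<le> (LBINT t. norm (complex_of_real (f t) * cis (\<omega> * t)))"
    unfolding fourier_def by (rule integral_norm_bound)
  then show ?thesis by (simp add: norm_mult)
qed

lemma cnj_fourier: "cnj (fourier f \<omega>) = fourier f (- \<omega>)"
  unfolding fourier_def by (subst Bochner_Integration.integral_cnj[symmetric]) (simp add: cis_cnj)

lemma gauss_kernel_nonneg: "0 < s \<Longrightarrow> 0 \<le> gauss_kernel s d"
  by (simp add: gauss_kernel_def)

lemma gauss_kernel_le: "0 < s \<Longrightarrow> gauss_kernel s d \<le> 2 * sqrt pi / s"
  using mult_left_mono[of "exp (- (d / s)\<^sup>2)" 1 "2 * sqrt pi / s"] by (simp add: gauss_kernel_def)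

lemma integrable_gauss_weight: "0 < s \<Longrightarrow> integrable lborel (\<lambda>\<omega>::real. exp (- (s * \<omega> / 2)\<^sup>2))"
  using integrable_gaussian[of "(s / 2)\<^sup>2" 0] by (simp add: power_mult_distrib power_divide)

lemma integrable_mult_gauss_kernel:
  assumes f: "integrable lborel f" and s: "0 < s"
  shows "integrable lborel (\<lambda>r. f r * gauss_kernel s (t - r))"
proof (rule Bochner_Integration.integrable_bound)
  show "integrable lborel (\<lambda>r. 2 * sqrt pi / s * f r)"
    using f by simp
  show "AE r in lborel. norm (f r * gauss_kernel s (t - r)) \<le> norm (2 * sqrt pi / s * f r)"
  proof (intro AE_I2)
    fix r
    have "\<bar>f r\<bar> * gauss_kernel s (t - r) \<le> \<bar>f r\<bar> * (2 * sqrt pi / s)"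
      by (intro mult_left_mono gauss_kernel_le s) simp
    then show "norm (f r * gauss_kernel s (t - r)) \<le> norm (2 * sqrt pi / s * f r)"
      using s gauss_kernel_nonneg[OF s] by (simp add: abs_mult mult.commute)
  qed
qed (use f in \<open>simp add: gauss_kernel_def\<close>)

lemma abs_gauss_convolution_le:
  assumes f: "integrable lborel f" and s: "0 < s"
  shows "\<bar>LBINT r. f r * gauss_kernel s (t - r)\<bar> \<le> 2 * sqrt pi / s * (LBINT r. \<bar>f r\<bar>)"
proof -
  have "\<bar>LBINT r. f r * gauss_kernel s (t - r)\<bar> \<le> (LBINT r. \<bar>f r * gauss_kernel s (t - r)\<bar>)"
    using integral_norm_bound[of lborel "\<lambda>r. f r * gauss_kernel s (t - r)"] by simp
  also have "\<dots> \<le> (LBINT r. \<bar>f r\<bar> * (2 * sqrt pi / s))"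
  proof (rule Bochner_Integration.integral_mono)
    show "integrable lborel (\<lambda>r. \<bar>f r * gauss_kernel s (t - r)\<bar>)"
      by (rule integrable_abs[OF integrable_mult_gauss_kernel[OF f s]])
    show "integrable lborel (\<lambda>r. \<bar>f r\<bar> * (2 * sqrt pi / s))"
      using f by simp
    show "\<bar>f r * gauss_kernel s (t - r)\<bar> \<le> \<bar>f r\<bar> * (2 * sqrt pi / s)" for r
      unfolding abs_mult abs_of_nonneg[OF gauss_kernel_nonneg[OF s]]
      by (intro mult_left_mono gauss_kernel_le[OF s] abs_ge_zero)
  qed
  also have "\<dots> = 2 * sqrt pi / s * (LBINT r. \<bar>f r\<bar>)"
    by simp
  finally show ?thesis .
qed

lemma integrable_mult_gauss_convolution:
  assumes f: "integrable lborel f" and s: "0 < s"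
  shows "integrable lborel (\<lambda>t. f t * (LBINT r. f r * gauss_kernel s (t - r)))"
proof (rule Bochner_Integration.integrable_bound)
  let ?C = "2 * sqrt pi / s * (LBINT r. \<bar>f r\<bar>)"
  show "integrable lborel (\<lambda>t. ?C * f t)"
    using f by simp
  show "AE t in lborel. norm (f t * (LBINT r. f r * gauss_kernel s (t - r))) \<le> norm (?C * f t)"
  proof (intro AE_I2)
    fix t
    have "\<bar>f t\<bar> * \<bar>LBINT r. f r * gauss_kernel s (t - r)\<bar> \<le> \<bar>f t\<bar> * ?C"
      by (intro mult_left_mono abs_gauss_convolution_le f s) simp
    then show "norm (f t * (LBINT r. f r * gauss_kernel s (t - r))) \<le> norm (?C * f t)"
      using s by (simp add: abs_mult ac_simps)
  qed
qed (use f in \<open>simp add: gauss_kernel_def\<close>)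

lemma integral_cis_mult_cnj_fourier:
  fixes f :: "real \<Rightarrow> real"
  assumes f: "integrable lborel f" and s: "0 < s"
  shows "(CLBINT \<omega>. complex_of_real (exp (- (s * \<omega> / 2)\<^sup>2)) * cis (\<omega> * t) * cnj (fourier f \<omega>))
       = complex_of_real (LBINT r. f r * gauss_kernel s (t - r))"
proof -
  define w where "w = (\<lambda>\<omega>::real. exp (- (s * \<omega> / 2)\<^sup>2))"
  define G where "G \<omega> r = complex_of_real (w \<omega>) * cis (\<omega> * t) * (complex_of_real (f r) * cis (- \<omega> * r))"
    for \<omega> r
  have f_meas[measurable]: "f \<in> borel_measurable borel"
    using borel_measurable_integrable[OF f] by simp
  have "(CLBINT \<omega>. complex_of_real (w \<omega>) * cis (\<omega> * t) * cnj (fourier f \<omega>))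
      = (CLBINT \<omega>. CLBINT r. G \<omega> r)"
    unfolding cnj_fourier unfolding fourier_def G_def integral_mult_right_zero ..
  also have "\<dots> = (CLBINT r. CLBINT \<omega>. G \<omega> r)"
  proof (rule lborel_pair.Fubini_integral_product_bound)
    show "integrable lborel w" unfolding w_def by (rule integrable_gauss_weight[OF s])
    show "integrable lborel (\<lambda>r. \<bar>f r\<bar>)" using f by simp
    show "norm (G \<omega> r) \<le> w \<omega> * \<bar>f r\<bar>" for \<omega> r
      by (simp add: G_def w_def norm_mult)
  qed (simp_all add: G_def w_def)
  also have "\<dots> = (CLBINT r. complex_of_real (f r * gauss_kernel s (t - r)))"
  proof -
    have "cis (\<omega> * t) * cis (- \<omega> * r) = cis ((t - r) * \<omega>)" for \<omega> r
      by (simp add: cis_mult algebra_simps)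
    then have "G \<omega> r = complex_of_real (f r) * (complex_of_real (w \<omega>) * cis ((t - r) * \<omega>))" for \<omega> r
      unfolding G_def by (metis mult.assoc mult.left_commute)
    then have "(CLBINT \<omega>. G \<omega> r) = complex_of_real (f r) * fourier w (t - r)" for r
      unfolding fourier_def by simp
    then show ?thesis
      using fourier_gaussian[OF s] by (simp add: w_def)
  qed
  also have "\<dots> = complex_of_real (LBINT r. f r * gauss_kernel s (t - r))"
    by (rule integral_of_real[OF integrable_mult_gauss_kernel[OF f s]])
  finally show ?thesis by (simp add: w_def)
qed

lemma integrable_gauss_weight_mult_norm_fourier:
  fixes f :: "real \<Rightarrow> real"
  assumes f: "integrable lborel f" and s: "0 < s"
  shows "integrable lborel (\<lambda>\<omega>. exp (- (s * \<omega> / 2)\<^sup>2) * (cmod (fourier f \<omega>))\<^sup>2)"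
proof -
  have [measurable]: "f \<in> borel_measurable borel"
    using borel_measurable_integrable[OF f] by simp
  show ?thesis
  proof (rule Bochner_Integration.integrable_bound)
    show "integrable lborel (\<lambda>\<omega>. (LBINT t. \<bar>f t\<bar>)\<^sup>2 * exp (- (s * \<omega> / 2)\<^sup>2))"
      using integrable_gauss_weight[OF s] by simp
    show "AE \<omega> in lborel. norm (exp (- (s * \<omega> / 2)\<^sup>2) * (cmod (fourier f \<omega>))\<^sup>2) \<le>
        norm ((LBINT t. \<bar>f t\<bar>)\<^sup>2 * exp (- (s * \<omega> / 2)\<^sup>2))"
      using norm_fourier_le[of f] by (intro AE_I2) (simp add: mult.commute mult_left_mono power_mono)
  qed measurable
qed

lemma plancherel_regularized:
  fixes f :: "real \<Rightarrow> real"
  assumes f: "integrable lborel f" and s: "0 < s"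
  shows "(LBINT \<omega>. exp (- (s * \<omega> / 2)\<^sup>2) * (cmod (fourier f \<omega>))\<^sup>2) =
    (LBINT t. f t * (LBINT r. f r * gauss_kernel s (t - r)))" (is "?lhs = ?rhs")
proof -
  define w where "w = (\<lambda>\<omega>::real. exp (- (s * \<omega> / 2)\<^sup>2))"
  define C where "C = (LBINT t. \<bar>f t\<bar>)"
  define H where "H \<omega> t = complex_of_real (w \<omega>) * (complex_of_real (f t) * cis (\<omega> * t)) * cnj (fourier f \<omega>)"
    for \<omega> t
  have f_meas[measurable]: "f \<in> borel_measurable borel"
    using borel_measurable_integrable[OF f] by simp
  have "complex_of_real ?lhs = (CLBINT \<omega>. complex_of_real (w \<omega>) * fourier f \<omega> * cnj (fourier f \<omega>))"
    by (simp add: integral_of_real[OF integrable_gauss_weight_mult_norm_fourier[OF f s], symmetric]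
        complex_norm_square w_def mult.assoc del: of_real_power)
  also have "\<dots> = (CLBINT \<omega>. CLBINT t. H \<omega> t)"
    unfolding H_def fourier_def[of f] integral_mult_left_zero integral_mult_right_zero ..
  also have "\<dots> = (CLBINT t. CLBINT \<omega>. H \<omega> t)"
  proof (rule lborel_pair.Fubini_integral_product_bound)
    show "integrable lborel (\<lambda>\<omega>. C * w \<omega>)"
      unfolding w_def using integrable_gauss_weight[OF s] by simp
    show "integrable lborel (\<lambda>t. \<bar>f t\<bar>)"
      using f by simp
    show "norm (H \<omega> t) \<le> C * w \<omega> * \<bar>f t\<bar>" for \<omega> t
      using norm_fourier_le[of f \<omega>]
      by (simp add: H_def w_def C_def norm_mult mult_left_mono mult_right_mono mult_ac)
  qed (simp_all add: H_def w_def)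
  also have "\<dots> = (CLBINT t. complex_of_real (f t * (LBINT r. f r * gauss_kernel s (t - r))))"
  proof -
    have "(CLBINT \<omega>. H \<omega> t) = complex_of_real (f t) *
        (CLBINT \<omega>. complex_of_real (w \<omega>) * cis (\<omega> * t) * cnj (fourier f \<omega>))" for t
      unfolding H_def integral_mult_right_zero[symmetric] by (simp add: mult_ac)
    then show ?thesis
      by (simp add: integral_cis_mult_cnj_fourier[OF f s] w_def)
  qed
  also have "\<dots> = complex_of_real ?rhs"
    by (rule integral_of_real[OF integrable_mult_gauss_convolution[OF f s]])
  finally show "?lhs = ?rhs" by simp
qed

lemma integral_gauss_kernel_substitution:
  fixes f :: "real \<Rightarrow> real"
  assumes s: "0 < s"
  shows "(LBINT r. f r * gauss_kernel s (t - r)) = 2 * sqrt pi * (LBINT v. f (t + s * v) * exp (- v\<^sup>2))"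
proof -
  have kernel: "gauss_kernel s (t - (t + s * v)) = 2 * sqrt pi / s * exp (- v\<^sup>2)" for v
    using s by (simp add: gauss_kernel_def power_divide power_mult_distrib)
  have "(LBINT r. f r * gauss_kernel s (t - r)) =
      s *\<^sub>R (LBINT v. f (t + s * v) * gauss_kernel s (t - (t + s * v)))"
    using s by (subst lborel_integral_real_affine[where c = s and t = t]) auto
  also have "\<dots> = s * (2 * sqrt pi / s) * (LBINT v. f (t + s * v) * exp (- v\<^sup>2))"
    unfolding kernel by (simp add: mult_ac)
  finally show ?thesis
    using s by simp
qed

context
  fixes f :: "real \<Rightarrow> real" and M :: real
  assumes f_meas[measurable]: "f \<in> borel_measurable borel" and f_bound: "\<And>t. \<bar>f t\<bar> \<le> M"
begin

lemma integrable_gauss_mollified: "integrable lborel (\<lambda>v. f (t + c * v) * exp (- v\<^sup>2))"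
proof (rule Bochner_Integration.integrable_bound)
  show "integrable lborel (\<lambda>v::real. M * exp (- v\<^sup>2))"
    using integrable_gaussian[of 1 0] by simp
  show "AE v in lborel. norm (f (t + c * v) * exp (- v\<^sup>2)) \<le> norm (M * exp (- v\<^sup>2))"
    by (intro AE_I2) (simp add: abs_mult mult_right_mono order_trans[OF f_bound abs_ge_self])
qed measurable

lemma abs_integral_gauss_mollified_le: "\<bar>LBINT v. f (t + c * v) * exp (- v\<^sup>2)\<bar> \<le> M * sqrt pi"
proof -
  have "\<bar>LBINT v. f (t + c * v) * exp (- v\<^sup>2)\<bar> \<le> (LBINT v. \<bar>f (t + c * v) * exp (- v\<^sup>2)\<bar>)"
    using integral_norm_bound[of lborel "\<lambda>v. f (t + c * v) * exp (- v\<^sup>2)"] by simp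
  also have "\<dots> \<le> (LBINT v. M * exp (- v\<^sup>2))"
  proof (rule Bochner_Integration.integral_mono)
    show "integrable lborel (\<lambda>v. \<bar>f (t + c * v) * exp (- v\<^sup>2)\<bar>)"
      by (rule integrable_abs[OF integrable_gauss_mollified])
    show "integrable lborel (\<lambda>v::real. M * exp (- v\<^sup>2))"
      using integrable_gaussian[of 1 0] by simp
    show "\<bar>f (t + c * v) * exp (- v\<^sup>2)\<bar> \<le> M * exp (- v\<^sup>2)" for v
      using f_bound by (simp add: abs_mult mult_right_mono)
  qed
  also have "\<dots> = M * sqrt pi"
    using integral_gaussian[of 1 0] by simp
  finally show ?thesis .
qed

lemma tendsto_integral_gauss_mollified:
  assumes cont: "isCont f t" and h: "h \<longlonglongrightarrow> 0"
  shows "(\<lambda>n. LBINT v. f (t + h n * v) * exp (- v\<^sup>2)) \<longlonglongrightarrow> sqrt pi * f t"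
proof -
  have "(\<lambda>n. LBINT v. f (t + h n * v) * exp (- v\<^sup>2)) \<longlonglongrightarrow> (LBINT v. f t * exp (- v\<^sup>2))"
  proof (rule integral_dominated_convergence[where w = "\<lambda>v. M * exp (- v\<^sup>2)"])
    show "integrable lborel (\<lambda>v::real. M * exp (- v\<^sup>2))"
      using integrable_gaussian[of 1 0] by simp
    show "AE v in lborel. norm (f (t + h n * v) * exp (- v\<^sup>2)) \<le> M * exp (- v\<^sup>2)" for n
      using f_bound by (intro AE_I2) (simp add: abs_mult mult_right_mono)
    show "AE v in lborel. (\<lambda>n. f (t + h n * v) * exp (- v\<^sup>2)) \<longlonglongrightarrow> f t * exp (- v\<^sup>2)"
    proof (intro AE_I2 tendsto_mult_right)
      fix v
      have "(\<lambda>n. t + h n * v) \<longlonglongrightarrow> t"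
        using tendsto_add[OF tendsto_const[of t] tendsto_mult_right[OF h, of v]] by simp
      with cont show "(\<lambda>n. f (t + h n * v)) \<longlonglongrightarrow> f t"
        by (rule isCont_tendsto_compose)
    qed
  qed measurable
  also have "(LBINT v. f t * exp (- v\<^sup>2)) = sqrt pi * f t"
    using integral_gaussian[of 1 0] by simp
  finally show ?thesis .
qed

lemma plancherel_regularized_limit:
  fixes s :: "nat \<Rightarrow> real"
  assumes f: "integrable lborel f" and cont: "AE t in lborel. isCont f t"
    and s: "\<And>n. 0 < s n" "s \<longlonglongrightarrow> 0"
  shows "(\<lambda>n. LBINT t. f t * (LBINT r. f r * gauss_kernel (s n) (t - r))) \<longlonglongrightarrow>
    2 * pi * (LBINT t. (f t)\<^sup>2)"
proof -
  define I where "I n t = (LBINT v. f (t + s n * v) * exp (- v\<^sup>2))" for n t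
  have "(\<lambda>n. LBINT t. f t * (2 * sqrt pi * I n t)) \<longlonglongrightarrow> (LBINT t. 2 * pi * (f t)\<^sup>2)"
  proof (rule integral_dominated_convergence[where w = "\<lambda>t. 2 * pi * M * \<bar>f t\<bar>"])
    show "integrable lborel (\<lambda>t. 2 * pi * M * \<bar>f t\<bar>)"
      using f by simp
    show "AE t in lborel. norm (f t * (2 * sqrt pi * I n t)) \<le> 2 * pi * M * \<bar>f t\<bar>" for n
    proof (intro AE_I2)
      fix t
      have "norm (f t * (2 * sqrt pi * I n t)) = 2 * sqrt pi * \<bar>f t\<bar> * \<bar>I n t\<bar>"
        by (simp add: abs_mult)
      also have "\<dots> \<le> 2 * sqrt pi * \<bar>f t\<bar> * (M * sqrt pi)"
        unfolding I_def by (intro mult_left_mono abs_integral_gauss_mollified_le) auto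
      also have "\<dots> = 2 * (sqrt pi * sqrt pi) * M * \<bar>f t\<bar>"
        by (simp only: mult_ac)
      finally show "norm (f t * (2 * sqrt pi * I n t)) \<le> 2 * pi * M * \<bar>f t\<bar>"
        by simp
    qed
    show "AE t in lborel. (\<lambda>n. f t * (2 * sqrt pi * I n t)) \<longlonglongrightarrow> 2 * pi * (f t)\<^sup>2"
      using cont
    proof eventually_elim
      case (elim t)
      have "(\<lambda>n. f t * (2 * sqrt pi * I n t)) \<longlonglongrightarrow> f t * (2 * sqrt pi * (sqrt pi * f t))"
        unfolding I_def by (intro tendsto_intros tendsto_integral_gauss_mollified elim s(2))
      moreover have "f t * (2 * sqrt pi * (sqrt pi * f t)) = 2 * (sqrt pi * sqrt pi) * (f t * f t)"
        by (simp only: mult_ac)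
      ultimately show ?case
        by (simp add: power2_eq_square)
    qed
  qed (simp_all add: I_def)
  then show ?thesis
    by (simp add: integral_gauss_kernel_substitution[OF s(1)] I_def)
qed

end

lemma tendsto_nn_integral_gauss_weight:
  fixes g :: "real \<Rightarrow> real"
  assumes [measurable]: "g \<in> borel_measurable borel" and g: "\<And>\<omega>. 0 \<le> g \<omega>"
  shows "(\<lambda>n. \<integral>\<^sup>+\<omega>. ennreal (exp (- (inverse (real (Suc n)) * \<omega> / 2)\<^sup>2) * g \<omega>) \<partial>lborel) \<longlonglongrightarrow>
    (\<integral>\<^sup>+\<omega>. ennreal (g \<omega>) \<partial>lborel)"
proof (rule nn_integral_LIMSEQ)
  show "incseq (\<lambda>n \<omega>. ennreal (exp (- (inverse (real (Suc n)) * \<omega> / 2)\<^sup>2) * g \<omega>))"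
  proof (intro incseq_SucI le_funI ennreal_leI mult_right_mono g)
    fix n and \<omega> :: real
    have "(inverse (real (Suc (Suc n))) * \<omega> / 2)\<^sup>2 \<le> (inverse (real (Suc n)) * \<omega> / 2)\<^sup>2"
      by (auto simp: power_mult_distrib power_divide intro!: mult_right_mono divide_right_mono power_mono)
    then show "exp (- (inverse (real (Suc n)) * \<omega> / 2)\<^sup>2) \<le> exp (- (inverse (real (Suc (Suc n))) * \<omega> / 2)\<^sup>2)"
      by simp
  qed
  show "(\<lambda>n. ennreal (exp (- (inverse (real (Suc n)) * \<omega> / 2)\<^sup>2) * g \<omega>)) \<longlonglongrightarrow> ennreal (g \<omega>)" for \<omega>
  proof (intro tendsto_ennrealI)
    have "(\<lambda>n. exp (- (inverse (real (Suc n)) * \<omega> / 2)\<^sup>2) * g \<omega>) \<longlonglongrightarrow> exp (- (0 * \<omega> / 2)\<^sup>2) * g \<omega>"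
      by (intro tendsto_intros LIMSEQ_inverse_real_of_nat) simp
    then show "(\<lambda>n. exp (- (inverse (real (Suc n)) * \<omega> / 2)\<^sup>2) * g \<omega>) \<longlonglongrightarrow> g \<omega>"
      by simp
  qed
qed measurable

theorem plancherel_fourier:
  fixes f :: "real \<Rightarrow> real"
  assumes f: "integrable lborel f" and bound: "\<And>t. \<bar>f t\<bar> \<le> M" and cont: "AE t in lborel. isCont f t"
  shows "integrable lborel (\<lambda>\<omega>. (cmod (fourier f \<omega>))\<^sup>2)"
    and "(LBINT \<omega>. (cmod (fourier f \<omega>))\<^sup>2) = 2 * pi * (LBINT t. (f t)\<^sup>2)"
proof -
  have f_meas[measurable]: "f \<in> borel_measurable borel"
    using borel_measurable_integrable[OF f] by simp
  define s where "s n = inverse (real (Suc n))" for n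
  have s_pos: "0 < s n" for n
    by (simp add: s_def)
  have "(\<lambda>n. \<integral>\<^sup>+\<omega>. ennreal (exp (- (s n * \<omega> / 2)\<^sup>2) * (cmod (fourier f \<omega>))\<^sup>2) \<partial>lborel) \<longlonglongrightarrow>
      (\<integral>\<^sup>+\<omega>. ennreal ((cmod (fourier f \<omega>))\<^sup>2) \<partial>lborel)"
    unfolding s_def by (rule tendsto_nn_integral_gauss_weight) simp_all
  moreover have "(\<integral>\<^sup>+\<omega>. ennreal (exp (- (s n * \<omega> / 2)\<^sup>2) * (cmod (fourier f \<omega>))\<^sup>2) \<partial>lborel) =
      ennreal (LBINT t. f t * (LBINT r. f r * gauss_kernel (s n) (t - r)))" for n
    unfolding plancherel_regularized[OF f s_pos, symmetric]
    by (intro nn_integral_eq_integral integrable_gauss_weight_mult_norm_fourier[OF f s_pos]) auto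
  moreover have "(\<lambda>n. ennreal (LBINT t. f t * (LBINT r. f r * gauss_kernel (s n) (t - r)))) \<longlonglongrightarrow>
      ennreal (2 * pi * (LBINT t. (f t)\<^sup>2))"
    unfolding s_def by (intro tendsto_ennrealI plancherel_regularized_limit[OF f_meas bound f cont]
        LIMSEQ_inverse_real_of_nat) simp
  ultimately have "(\<integral>\<^sup>+\<omega>. ennreal ((cmod (fourier f \<omega>))\<^sup>2) \<partial>lborel) = ennreal (2 * pi * (LBINT t. (f t)\<^sup>2))"
    using LIMSEQ_unique by simp
  then show "integrable lborel (\<lambda>\<omega>. (cmod (fourier f \<omega>))\<^sup>2)"
    and "(LBINT \<omega>. (cmod (fourier f \<omega>))\<^sup>2) = 2 * pi * (LBINT t. (f t)\<^sup>2)"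
    by (subst (asm) nn_integral_eq_integrable; simp)+
qed

section \<open>The error function as a Gaussian integral over a half-line\<close>

lemma set_integral_unit_interval_power_series:
  fixes c :: "nat \<Rightarrow> complex" and k :: "nat \<Rightarrow> nat"
  assumes c: "summable (\<lambda>n. norm (c n))"
  shows "(CLBINT l:{0..1}. (\<Sum>n. complex_of_real l ^ k n * c n)) = (\<Sum>n. c n / of_nat (k n + 1))"
proof -
  define u where "u n l = complex_of_real (indicator {0..1} l * l ^ k n) * c n" for n and l :: real
  have power_integrable: "integrable lborel (\<lambda>l::real. indicator {0..1} l * l ^ k n)" for n
    using borel_integrable_atLeastAtMost'[of 0 1 "\<lambda>l. l ^ k n"]
    by (simp add: set_integrable_def continuous_intros)
  have u_integrable: "integrable lborel (u n)" for n
    unfolding u_def by (intro integrable_mult_left integrable_of_real power_integrable)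
  have u_norm: "norm (u n l) \<le> indicator {0..1} l * norm (c n)" for n l
    by (auto simp: u_def norm_mult norm_power indicator_def power_le_one mult_left_le_one_le)
  have "(\<lambda>n. u n l) sums (indicator {0..1} l *\<^sub>R (\<Sum>n. complex_of_real l ^ k n * c n))" for l
  proof (cases "l \<in> {0..1}")
    case True
    have "summable (\<lambda>n. complex_of_real l ^ k n * c n)"
      by (rule summable_comparison_test'[OF c])
        (use True in \<open>simp add: norm_mult norm_power power_le_one mult_left_le_one_le\<close>)
    with True show ?thesis
      by (simp add: u_def summable_sums)
  qed (simp add: u_def)
  then have "(CLBINT l:{0..1}. (\<Sum>n. complex_of_real l ^ k n * c n)) = (CLBINT l. (\<Sum>n. u n l))"
    unfolding set_lebesgue_integral_def by (simp add: sums_iff)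
  also have "\<dots> = (\<Sum>n. integral\<^sup>L lborel (u n))"
  proof (rule integral_suminf[OF u_integrable])
    show "AE l in lborel. summable (\<lambda>n. norm (u n l))"
    proof (intro AE_I2)
      fix l
      show "summable (\<lambda>n. norm (u n l))"
        by (rule summable_comparison_test'[OF summable_mult[OF c, of "indicator {0..1} l"]])
          (use u_norm in simp)
    qed
    show "summable (\<lambda>n. \<integral>l. norm (u n l) \<partial>lborel)"
    proof (rule summable_comparison_test'[OF c])
      fix n
      have "(\<integral>l. norm (u n l) \<partial>lborel) \<le> (\<integral>l. indicator {0..1::real} l * norm (c n) \<partial>lborel)"
        by (rule Bochner_Integration.integral_mono) (use u_integrable u_norm in simp_all)
      then show "norm (\<integral>l. norm (u n l) \<partial>lborel) \<le> norm (c n)"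
        by simp
    qed
  qed
  also have "\<dots> = (\<Sum>n. c n / of_nat (k n + 1))"
  proof -
    have "(LBINT l. indicator {0..1} l * l ^ k n) = 1 / (k n + 1)" for n
      using integral_power[of 0 1 "k n"] by (simp add: mult.commute)
    then show ?thesis
      unfolding u_def integral_mult_left_zero integral_of_real[OF power_integrable] by simp
  qed
  finally show ?thesis .
qed

lemma exp_neg_square_sums:
  fixes z :: complex and l :: real
  shows "(\<lambda>n. complex_of_real l ^ (2 * n) * (z * (- z\<^sup>2) ^ n / fact n)) sums (z * exp (- (complex_of_real l * z)\<^sup>2))"
proof -
  have "(\<lambda>n. z * ((- (complex_of_real l * z)\<^sup>2) ^ n /\<^sub>R fact n)) sums (z * exp (- (complex_of_real l * z)\<^sup>2))"
    by (intro sums_mult exp_converges)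
  moreover have "(- (complex_of_real l * z)\<^sup>2) ^ n = complex_of_real l ^ (2 * n) * (- z\<^sup>2) ^ n" for n
  proof -
    have "- (complex_of_real l * z)\<^sup>2 = (complex_of_real l)\<^sup>2 * (- z\<^sup>2)"
      by (simp add: power_mult_distrib)
    then show ?thesis
      by (simp only: power_mult_distrib power_mult)
  qed
  ultimately show ?thesis
    by (simp add: scaleR_conv_of_real field_simps)
qed

lemma cerf_series_eq_integral:
  fixes z :: complex
  shows "(\<Sum>n. (-1) ^ n * z ^ (2 * n + 1) / (fact n * of_nat (2 * n + 1))) =
    (CLBINT l:{0..1}. z * exp (- (complex_of_real l * z)\<^sup>2))"
proof -
  define c where "c n = z * (- z\<^sup>2) ^ n / fact n" for n
  have "summable (\<lambda>n. norm (c n))"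
    using summable_mult[OF summable_exp[of "(cmod z)\<^sup>2"], of "cmod z"]
    by (simp add: c_def norm_mult norm_divide norm_power norm_inverse power_mult_distrib mult_ac
        divide_inverse)
  then have "(CLBINT l:{0..1}. z * exp (- (complex_of_real l * z)\<^sup>2)) = (\<Sum>n. c n / of_nat (2 * n + 1))"
    unfolding sums_unique[OF exp_neg_square_sums] c_def[symmetric]
    by (rule set_integral_unit_interval_power_series)
  also have "(\<Sum>n. c n / of_nat (2 * n + 1)) = (\<Sum>n. (-1) ^ n * z ^ (2 * n + 1) / (fact n * of_nat (2 * n + 1)))"
  proof -
    have "(- z\<^sup>2) ^ n = (-1) ^ n * z ^ (2 * n)" for n
      by (simp add: power_minus[of "z\<^sup>2"] power_mult)
    then show ?thesis
      by (simp add: c_def field_simps)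
  qed
  finally show ?thesis ..
qed

lemma norm_exp_neg_square_shift_le:
  fixes w :: complex and t :: real
  shows "norm (exp (- (complex_of_real t - w)\<^sup>2)) \<le> exp ((cmod w)\<^sup>2) * exp (- t\<^sup>2 / 2)"
proof -
  have "Re (- (complex_of_real t - w)\<^sup>2) = (Im w)\<^sup>2 - (t - Re w)\<^sup>2"
    by (simp add: power2_eq_square algebra_simps)
  also have "\<dots> \<le> (Im w)\<^sup>2 + (Re w)\<^sup>2 - t\<^sup>2 / 2"
    using zero_le_power2[of "t - 2 * Re w"] by (simp add: power2_eq_square algebra_simps)
  also have "\<dots> = (cmod w)\<^sup>2 + - t\<^sup>2 / 2"
    by (simp add: cmod_power2)
  finally show ?thesis
    by (simp add: exp_add[symmetric])
qed

lemma integrable_affine_abs_mult_gaussian: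
  "integrable lborel (\<lambda>t::real. (a + b * \<bar>t\<bar>) * exp (- t\<^sup>2 / 2))"
proof -
  have "integrable lborel (\<lambda>t::real. sqrt (2 * pi) * a * (std_normal_density t * \<bar>t\<bar> ^ 0) +
      sqrt (2 * pi) * b * (std_normal_density t * \<bar>t\<bar> ^ 1))"
    by (intro Bochner_Integration.integrable_add integrable_mult_right integrable_std_normal_moment_abs)
  then show ?thesis
    by (simp add: normal_density_def field_simps)
qed

text \<open>\<open>gauss_shift_deriv c t l\<close> is the \<open>l\<close>-derivative of \<open>exp (- (t - l c)\<^sup>2)\<close> and also the
  \<open>t\<close>-derivative of \<open>- c exp (- (t - l c)\<^sup>2)\<close>, so integrating it over \<open>t > 0\<close> and \<open>0 \<le> l \<le> 1\<close>
  in the two possible orders yields the two sides of \<open>set_integral_gauss_shift_half_line_diff\<close>.\<close>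

definition gauss_shift_deriv :: "complex \<Rightarrow> real \<Rightarrow> real \<Rightarrow> complex" where
  "gauss_shift_deriv c t l =
     2 * c * (complex_of_real t - complex_of_real l * c) * exp (- (complex_of_real t - complex_of_real l * c)\<^sup>2)"

lemma norm_gauss_shift_deriv_le:
  assumes "0 \<le> l" "l \<le> 1"
  shows "norm (gauss_shift_deriv c t l) \<le>
    (2 * (cmod c)\<^sup>2 * exp ((cmod c)\<^sup>2) + 2 * cmod c * exp ((cmod c)\<^sup>2) * \<bar>t\<bar>) * exp (- t\<^sup>2 / 2)"
proof -
  have lc: "cmod (complex_of_real l * c) \<le> cmod c"
    using assms by (simp add: norm_mult mult_left_le_one_le)
  have "norm (exp (- (complex_of_real t - complex_of_real l * c)\<^sup>2)) \<le>
      exp ((cmod (complex_of_real l * c))\<^sup>2) * exp (- t\<^sup>2 / 2)"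
    by (rule norm_exp_neg_square_shift_le)
  also have "\<dots> \<le> exp ((cmod c)\<^sup>2) * exp (- t\<^sup>2 / 2)"
    using lc by (intro mult_right_mono) (simp_all add: power_mono)
  finally have "norm (exp (- (complex_of_real t - complex_of_real l * c)\<^sup>2)) \<le> exp ((cmod c)\<^sup>2) * exp (- t\<^sup>2 / 2)" .
  moreover have "norm (complex_of_real t - complex_of_real l * c) \<le> \<bar>t\<bar> + cmod c"
    using norm_triangle_ineq4[of "complex_of_real t" "complex_of_real l * c"] lc by simp
  ultimately have "norm (gauss_shift_deriv c t l) \<le> 2 * cmod c * (\<bar>t\<bar> + cmod c) * (exp ((cmod c)\<^sup>2) * exp (- t\<^sup>2 / 2))"
    unfolding gauss_shift_deriv_def norm_mult by (intro mult_mono mult_left_mono) auto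
  then show ?thesis
    by (simp add: power2_eq_square algebra_simps)
qed

lemma set_integral_gauss_shift_deriv_unit_interval:
  "(CLBINT l:{0..1}. gauss_shift_deriv c t l) = exp (- (complex_of_real t - c)\<^sup>2) - exp (- (complex_of_real t)\<^sup>2)"
proof -
  define F where "F = (\<lambda>l::real. exp (- (complex_of_real t - complex_of_real l * c)\<^sup>2))"
  have "(F has_vector_derivative gauss_shift_deriv c t l) (at l within X)" for l X
  proof -
    have "((\<lambda>w. exp (- (complex_of_real t - w * c)\<^sup>2)) has_field_derivative gauss_shift_deriv c t l)
        (at (complex_of_real l))"
      unfolding gauss_shift_deriv_def
      by (auto intro!: derivative_eq_intros simp: power2_eq_square algebra_simps)
    from has_vector_derivative_real_field[OF this] show ?thesis
      by (simp add: F_def)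
  qed
  then have "(CLBINT l=ereal 0..ereal 1. gauss_shift_deriv c t l) = F 1 - F 0"
    by (intro interval_integral_FTC_finite) (auto simp: gauss_shift_deriv_def intro!: continuous_intros)
  then show ?thesis
    by (simp add: interval_integral_Icc F_def)
qed

lemma integrable_gauss_shift_deriv:
  assumes l: "0 \<le> l" "l \<le> 1"
  shows "integrable lborel (\<lambda>t. gauss_shift_deriv c t l)"
proof (rule Bochner_Integration.integrable_bound)
  show "integrable lborel (\<lambda>t. (2 * (cmod c)\<^sup>2 * exp ((cmod c)\<^sup>2) + 2 * cmod c * exp ((cmod c)\<^sup>2) * \<bar>t\<bar>) *
      exp (- t\<^sup>2 / 2))"
    by (rule integrable_affine_abs_mult_gaussian)
  show "AE t in lborel. norm (gauss_shift_deriv c t l) \<le>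
      norm ((2 * (cmod c)\<^sup>2 * exp ((cmod c)\<^sup>2) + 2 * cmod c * exp ((cmod c)\<^sup>2) * \<bar>t\<bar>) * exp (- t\<^sup>2 / 2))"
    by (intro AE_I2 order_trans[OF norm_gauss_shift_deriv_le[OF l]]) simp
qed (simp add: gauss_shift_deriv_def)

lemma set_integral_gauss_shift_deriv_half_line:
  assumes l: "0 \<le> l" "l \<le> 1"
  shows "(CLBINT t:{0<..}. gauss_shift_deriv c t l) = c * exp (- (complex_of_real l * c)\<^sup>2)"
proof -
  define F where "F = (\<lambda>t::real. - c * exp (- (complex_of_real t - complex_of_real l * c)\<^sup>2))"
  have einterval: "einterval 0 \<infinity> = {0::real<..}"
    by (auto simp: einterval_def zero_ereal_def)
  have "(CLBINT t=0..\<infinity>. gauss_shift_deriv c t l) = 0 - F 0"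
  proof (rule interval_integral_FTC_integrable)
    show "(F has_vector_derivative gauss_shift_deriv c t l) (at t)" for t
    proof -
      have "((\<lambda>w. - c * exp (- (w - complex_of_real l * c)\<^sup>2)) has_field_derivative gauss_shift_deriv c t l)
          (at (complex_of_real t))"
        unfolding gauss_shift_deriv_def
        by (auto intro!: derivative_eq_intros simp: power2_eq_square algebra_simps)
      from has_vector_derivative_real_field[OF this] show ?thesis
        by (simp add: F_def)
    qed
    show "set_integrable lborel (einterval 0 \<infinity>) (\<lambda>t. gauss_shift_deriv c t l)"
      unfolding einterval set_integrable_def
      by (intro integrable_mult_indicator integrable_gauss_shift_deriv[OF l]) auto
    show "((F \<circ> real_of_ereal) \<longlongrightarrow> F 0) (at_right 0)"
      unfolding zero_ereal_def ereal_tendsto_simps F_def by (intro tendsto_eq_intros) auto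
    show "((F \<circ> real_of_ereal) \<longlongrightarrow> 0) (at_left \<infinity>)"
      unfolding ereal_tendsto_simps
    proof (rule Lim_null_comparison)
      show "\<forall>\<^sub>F t in at_top. norm (F t) \<le> cmod c * exp ((cmod (complex_of_real l * c))\<^sup>2) * exp (- t\<^sup>2 / 2)"
        using norm_exp_neg_square_shift_le[of _ "complex_of_real l * c"]
        by (intro always_eventually allI) (simp add: F_def norm_mult mult.assoc mult_left_mono del: norm_exp_eq_Re)
      show "((\<lambda>t. cmod c * exp ((cmod (complex_of_real l * c))\<^sup>2) * exp (- t\<^sup>2 / 2)) \<longlongrightarrow> 0) at_top"
        by real_asymp
    qed
  qed (auto simp: gauss_shift_deriv_def intro!: continuous_intros)
  then show ?thesis
    by (simp add: interval_lebesgue_integral_0_infty F_def)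
qed

lemma set_integrable_gauss_shift_half_line:
  "set_integrable lborel {0<..} (\<lambda>t. exp (- (complex_of_real t - w)\<^sup>2))"
  unfolding set_integrable_def
proof (rule Bochner_Integration.integrable_bound)
  show "integrable lborel (\<lambda>t::real. exp ((cmod w)\<^sup>2) * exp (- t\<^sup>2 / 2))"
    using integrable_gaussian[of "1 / 2" 0] by simp
  show "AE t in lborel. norm (indicator {0<..} t *\<^sub>R exp (- (complex_of_real t - w)\<^sup>2)) \<le>
      norm (exp ((cmod w)\<^sup>2) * exp (- t\<^sup>2 / 2))"
    using norm_exp_neg_square_shift_le[of _ w]
    by (intro AE_I2) (auto simp: indicator_def simp del: norm_exp_eq_Re)
qed measurable

lemma set_integral_gauss_shift_half_line_diff:
  "(CLBINT t:{0<..}. exp (- (complex_of_real t - c)\<^sup>2)) - (CLBINT t:{0<..}. exp (- (complex_of_real t)\<^sup>2)) =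
    (CLBINT l:{0..1}. c * exp (- (complex_of_real l * c)\<^sup>2))"
proof -
  define k where "k t l = indicator {0<..} t *\<^sub>R (indicator {0..1} l *\<^sub>R gauss_shift_deriv c t l)" for t l :: real
  define B where "B t = (2 * (cmod c)\<^sup>2 * exp ((cmod c)\<^sup>2) + 2 * cmod c * exp ((cmod c)\<^sup>2) * \<bar>t\<bar>) *
    exp (- t\<^sup>2 / 2)" for t :: real
  have "(CLBINT t. CLBINT l. k t l) = (CLBINT l. CLBINT t. k t l)"
  proof (rule lborel_pair.Fubini_integral_product_bound)
    show "integrable lborel B"
      unfolding B_def by (rule integrable_affine_abs_mult_gaussian)
    show "integrable lborel (indicator {0..1} :: real \<Rightarrow> real)"
      by (intro integrable_real_indicator) auto
    show "norm (k t l) \<le> B t * indicator {0..1} l" for t l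
    proof -
      have "norm (k t l) \<le> indicator {0..1} l * norm (gauss_shift_deriv c t l)"
        by (simp add: k_def indicator_def)
      also have "\<dots> \<le> indicator {0..1} l * B t"
        using norm_gauss_shift_deriv_le[of l c t] by (auto simp: B_def indicator_def)
      finally show ?thesis
        by (simp add: mult.commute)
    qed
  qed (simp_all add: k_def gauss_shift_deriv_def)
  moreover have "(CLBINT l. k t l) =
      indicator {0<..} t *\<^sub>R (exp (- (complex_of_real t - c)\<^sup>2) - exp (- (complex_of_real t)\<^sup>2))" for t
    using set_integral_gauss_shift_deriv_unit_interval[of c t]
    unfolding k_def integral_scaleR_right by (simp add: set_lebesgue_integral_def)
  moreover have "(CLBINT t. k t l) = indicator {0..1} l *\<^sub>R (c * exp (- (complex_of_real l * c)\<^sup>2))" for l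
  proof -
    have "k t l = indicator {0..1} l *\<^sub>R (indicator {0<..} t *\<^sub>R gauss_shift_deriv c t l)" for t
      by (simp add: k_def)
    then have "(CLBINT t. k t l) = indicator {0..1} l *\<^sub>R (CLBINT t:{0<..}. gauss_shift_deriv c t l)"
      by (simp only: integral_scaleR_right set_lebesgue_integral_def)
    then show ?thesis
      using set_integral_gauss_shift_deriv_half_line[of l c] by (cases "l \<in> {0..1}") simp_all
  qed
  ultimately have "(CLBINT t. indicator {0<..} t *\<^sub>R exp (- (complex_of_real t - c)\<^sup>2) -
      indicator {0<..} t *\<^sub>R exp (- (complex_of_real t)\<^sup>2)) =
      (CLBINT l. indicator {0..1} l *\<^sub>R (c * exp (- (complex_of_real l * c)\<^sup>2)))"
    by (simp add: scaleR_diff_right)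
  then show ?thesis
    using set_integrable_gauss_shift_half_line[of c] set_integrable_gauss_shift_half_line[of 0]
    unfolding set_lebesgue_integral_def set_integrable_def
    by (simp add: Bochner_Integration.integral_diff)
qed

lemma set_integral_gaussian_half_line:
  "(CLBINT t:{0<..}. exp (- (complex_of_real t)\<^sup>2)) = complex_of_real (sqrt pi / 2)"
proof -
  have "(CLBINT t:{0<..}. exp (- (complex_of_real t)\<^sup>2)) = (CLBINT t. complex_of_real (indicator {0..} t *\<^sub>R exp (- t\<^sup>2)))"
    unfolding set_lebesgue_integral_def
  proof (rule integral_cong_AE)
    show "AE t in lborel. indicator {0<..} t *\<^sub>R exp (- (complex_of_real t)\<^sup>2) =
        complex_of_real (indicator {0..} t *\<^sub>R exp (- t\<^sup>2))"
      using AE_lborel_singleton[of 0] by eventually_elim (auto simp: indicator_def of_real_exp)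
  qed measurable
  also have "\<dots> = complex_of_real (LBINT t. indicator {0..} t *\<^sub>R exp (- t\<^sup>2))"
    using gaussian_moment_0 by (intro integral_of_real) (simp add: has_bochner_integral_iff)
  also have "(LBINT t. indicator {0..} t *\<^sub>R exp (- t\<^sup>2)) = sqrt pi / 2"
    using gaussian_moment_0 by (rule has_bochner_integral_integral_eq)
  finally show ?thesis .
qed

lemma one_plus_cerf_eq_integral:
  "1 + cerf c = 2 / complex_of_real (sqrt pi) * (CLBINT t:{0<..}. exp (- (complex_of_real t - c)\<^sup>2))"
proof -
  have "cerf c = 2 / complex_of_real (sqrt pi) *
      ((CLBINT t:{0<..}. exp (- (complex_of_real t - c)\<^sup>2)) - complex_of_real (sqrt pi / 2))"
    unfolding cerf_def cerf_series_eq_integral set_integral_gauss_shift_half_line_diff[symmetric]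
      set_integral_gaussian_half_line ..
  then show ?thesis
    by (simp add: right_diff_distrib)
qed

section \<open>The edge dipole moment sum rule\<close>

definition half_gaussian :: "real \<Rightarrow> real \<Rightarrow> real" where
  "half_gaussian a t = indicator {0<..} t * exp (- (t - a)\<^sup>2)"

lemma borel_measurable_half_gaussian[measurable]: "half_gaussian a \<in> borel_measurable borel"
  unfolding half_gaussian_def by measurable

lemma abs_half_gaussian_le_one: "\<bar>half_gaussian a t\<bar> \<le> 1"
  by (simp add: half_gaussian_def indicator_def)

lemma half_gaussian_square: "(half_gaussian a t)\<^sup>2 = indicator {0<..} t * exp (- 2 * (t - a)\<^sup>2)"
  by (simp add: half_gaussian_def indicator_def power2_eq_square exp_add[symmetric])

lemma integrable_half_gaussian: "integrable lborel (half_gaussian a)"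
proof (rule Bochner_Integration.integrable_bound)
  show "integrable lborel (\<lambda>t. exp (- 1 * (t - a)\<^sup>2))"
    by (rule integrable_gaussian) simp
  show "AE t in lborel. norm (half_gaussian a t) \<le> norm (exp (- 1 * (t - a)\<^sup>2))"
    by (intro AE_I2) (simp add: half_gaussian_def indicator_def)
qed simp

lemma isCont_half_gaussian:
  assumes "t \<noteq> 0"
  shows "isCont (half_gaussian a) t"
proof (cases "0 < t")
  case True
  have "continuous_on {0<..} (\<lambda>t. exp (- (t - a)\<^sup>2))"
    by (intro continuous_intros)
  then have "continuous_on {0<..} (half_gaussian a)"
    by (rule continuous_on_cong[THEN iffD1, rotated 2]) (auto simp: half_gaussian_def)
  with True show ?thesis
    by (simp add: continuous_on_eq_continuous_at)
next
  case False
  then have "continuous_on {..<0} (half_gaussian a)"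
    by (subst continuous_on_cong[where g = "\<lambda>_. 0"]) (auto simp: half_gaussian_def)
  with False assms show ?thesis
    by (simp add: continuous_on_eq_continuous_at)
qed

lemma AE_isCont_half_gaussian: "AE t in lborel. isCont (half_gaussian a) t"
  using AE_lborel_singleton[of 0] by eventually_elim (rule isCont_half_gaussian)

lemma integral_half_gaussian_square_bounds:
  "0 \<le> (LBINT t. (half_gaussian a t)\<^sup>2)" "(LBINT t. (half_gaussian a t)\<^sup>2) \<le> sqrt (pi / 2)"
proof -
  show "0 \<le> (LBINT t. (half_gaussian a t)\<^sup>2)"
    by simp
  have "(LBINT t. (half_gaussian a t)\<^sup>2) \<le> (LBINT t. exp (- 2 * (t - a)\<^sup>2))"
  proof (rule Bochner_Integration.integral_mono)
    show "integrable lborel (\<lambda>t. (half_gaussian a t)\<^sup>2)"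
      by (rule Bochner_Integration.integrable_bound[OF integrable_gaussian[of 2 a]])
        (auto simp: half_gaussian_square indicator_def)
  qed (use integrable_gaussian[of 2 a] in \<open>auto simp: half_gaussian_square indicator_def\<close>)
  also have "\<dots> = sqrt (pi / 2)"
    by (rule integral_gaussian) simp
  finally show "(LBINT t. (half_gaussian a t)\<^sup>2) \<le> sqrt (pi / 2)" .
qed

lemma set_integral_gauss_complex_shift_half_line:
  "(CLBINT t:{0<..}. exp (- (complex_of_real t - (complex_of_real a + \<i> * complex_of_real b))\<^sup>2)) =
    complex_of_real (exp (b\<^sup>2)) * cis (- (2 * a * b)) * fourier (half_gaussian a) (2 * b)"
proof -
  have "indicator {0<..} t *\<^sub>R exp (- (complex_of_real t - (complex_of_real a + \<i> * complex_of_real b))\<^sup>2) =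
      complex_of_real (exp (b\<^sup>2)) * cis (- (2 * a * b)) * (complex_of_real (half_gaussian a t) * cis (2 * b * t))"
    for t
  proof -
    define z where "z = - (complex_of_real t - (complex_of_real a + \<i> * complex_of_real b))\<^sup>2"
    have re: "Re z = b\<^sup>2 + - (t - a)\<^sup>2" and im: "Im z = - (2 * a * b) + 2 * b * t"
      unfolding z_def by (simp_all add: power2_eq_square algebra_simps)
    have "exp z = complex_of_real (exp (Re z)) * cis (Im z)"
      by (rule exp_eq_polar)
    also have "\<dots> = complex_of_real (exp (b\<^sup>2) * exp (- (t - a)\<^sup>2)) * (cis (- (2 * a * b)) * cis (2 * b * t))"
      unfolding re im exp_add cis_mult ..
    finally have "exp z = complex_of_real (exp (b\<^sup>2)) * cis (- (2 * a * b)) *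
        (complex_of_real (exp (- (t - a)\<^sup>2)) * cis (2 * b * t))"
      by (simp add: mult_ac)
    then show ?thesis
      by (simp add: z_def half_gaussian_def indicator_def)
  qed
  then show ?thesis
    unfolding set_lebesgue_integral_def fourier_def integral_mult_right_zero[symmetric] by simp
qed

lemma rhoT_eq_fourier_half_gaussian:
  "rhoT (0, y) (x, y') =
    - exp (- (y - y')\<^sup>2) / pi ^ 3 * (cmod (fourier (half_gaussian ((y + y') / sqrt 2)) (sqrt 2 * x)))\<^sup>2"
proof -
  define a where "a = (y + y') / sqrt 2"
  define b where "b = x / sqrt 2"
  have arg: "complex_of_real (sqrt 2) * ((complex_of_real (y + y') - \<i> * complex_of_real (0 - x)) / 2) =
      complex_of_real a + \<i> * complex_of_real b"
    by (simp add: a_def b_def field_simps flip: of_real_mult)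
  have "ginibre_h ((complex_of_real (y + y') - \<i> * complex_of_real (0 - x)) / 2) =
      2 / complex_of_real (sqrt pi) * (complex_of_real (exp (b\<^sup>2)) * cis (- (2 * a * b)) *
        fourier (half_gaussian a) (2 * b)) / complex_of_real (2 * pi)"
    unfolding ginibre_h_def arg one_plus_cerf_eq_integral set_integral_gauss_complex_shift_half_line ..
  then have "cmod (ginibre_h ((complex_of_real (y + y') - \<i> * complex_of_real (0 - x)) / 2)) =
      exp (b\<^sup>2) * cmod (fourier (half_gaussian a) (2 * b)) / (sqrt pi * pi)"
    by (simp add: norm_mult norm_divide)
  moreover have "(sqrt pi * pi)\<^sup>2 = pi ^ 3"
    by (simp add: power_mult_distrib power2_eq_square power3_eq_cube)
  ultimately have "(cmod (ginibre_h ((complex_of_real (y + y') - \<i> * complex_of_real (0 - x)) / 2)))\<^sup>2 =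
      (exp (b\<^sup>2))\<^sup>2 * (cmod (fourier (half_gaussian a) (2 * b)))\<^sup>2 / pi ^ 3"
    by (simp add: power_mult_distrib power_divide)
  moreover have "(exp (b\<^sup>2))\<^sup>2 = exp (x\<^sup>2)" and "2 * b = sqrt 2 * x"
    by (simp_all add: b_def power_divide flip: exp_double) (simp add: field_simps)
  ultimately show ?thesis
    by (simp add: rhoT_def a_def exp_diff exp_minus field_simps)
qed

lemma integral_rhoT_dx:
  shows "integrable lborel (\<lambda>x. rhoT (0, y) (x, y'))"
    and "(LBINT x. rhoT (0, y) (x, y')) =
      - (sqrt 2 / pi\<^sup>2) * exp (- (y - y')\<^sup>2) * (LBINT t. (half_gaussian ((y + y') / sqrt 2) t)\<^sup>2)"
proof -
  define \<psi> where "\<psi> = half_gaussian ((y + y') / sqrt 2)"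
  define q where "q \<omega> = (cmod (fourier \<psi> \<omega>))\<^sup>2" for \<omega>
  have q: "integrable lborel q" "(LBINT \<omega>. q \<omega>) = 2 * pi * (LBINT t. (\<psi> t)\<^sup>2)"
    unfolding q_def \<psi>_def
    using plancherel_fourier[OF integrable_half_gaussian abs_half_gaussian_le_one AE_isCont_half_gaussian]
    by simp_all
  have rhoT: "rhoT (0, y) (x, y') = - exp (- (y - y')\<^sup>2) / pi ^ 3 * q (0 + sqrt 2 * x)" for x
    unfolding rhoT_eq_fourier_half_gaussian q_def \<psi>_def by simp
  show "integrable lborel (\<lambda>x. rhoT (0, y) (x, y'))"
    unfolding rhoT by (intro integrable_mult_right lborel_integrable_real_affine q(1)) simp
  have "(LBINT \<omega>. q \<omega>) = sqrt 2 * (LBINT x. q (0 + sqrt 2 * x))"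
    by (subst lborel_integral_real_affine[where c = "sqrt 2" and t = 0]) auto
  then have "(LBINT x. q (0 + sqrt 2 * x)) = (LBINT \<omega>. q \<omega>) / sqrt 2"
    by simp
  also have "\<dots> = 2 / sqrt 2 * pi * (LBINT t. (\<psi> t)\<^sup>2)"
    unfolding q(2) by simp
  also have "2 / sqrt 2 = sqrt 2"
    by (rule real_div_sqrt) simp
  finally have "(LBINT x. q (0 + sqrt 2 * x)) = sqrt 2 * pi * (LBINT t. (\<psi> t)\<^sup>2)" .
  then show "(LBINT x. rhoT (0, y) (x, y')) =
      - (sqrt 2 / pi\<^sup>2) * exp (- (y - y')\<^sup>2) * (LBINT t. (half_gaussian ((y + y') / sqrt 2) t)\<^sup>2)"
    unfolding rhoT \<psi>_def by (simp add: power2_eq_square power3_eq_cube)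
qed

lemma gaussian_exponent_swap:
  fixes y y' t :: real
  shows "- (y - y')\<^sup>2 - 2 * (t - (y + y') / sqrt 2)\<^sup>2 = - (t - sqrt 2 * y)\<^sup>2 - 2 * (y' - t / sqrt 2)\<^sup>2"
proof -
  have sqrt2: "sqrt 2 * sqrt 2 = (2::real)"
    by simp
  have e1: "(t - (y + y') / sqrt 2)\<^sup>2 = t\<^sup>2 - sqrt 2 * t * y - sqrt 2 * t * y' + (y\<^sup>2 + 2 * y * y' + y'\<^sup>2) / 2"
    and e2: "(y' - t / sqrt 2)\<^sup>2 = y'\<^sup>2 - sqrt 2 * t * y' + t\<^sup>2 / 2"
    and e3: "(t - sqrt 2 * y)\<^sup>2 = t\<^sup>2 - 2 * sqrt 2 * t * y + 2 * y\<^sup>2"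
    and e4: "(y - y')\<^sup>2 = y\<^sup>2 - 2 * y * y' + y'\<^sup>2"
    by (simp_all add: power2_eq_square field_simps sqrt2)
  show ?thesis
    unfolding e1 e2 e3 e4 by (simp add: field_simps)
qed

lemma integrable_dy'_half_gaussian_square:
  "integrable lborel (\<lambda>y'. (y' - y) * exp (- (y - y')\<^sup>2) * (LBINT t. (half_gaussian ((y + y') / sqrt 2) t)\<^sup>2))"
proof (rule Bochner_Integration.integrable_bound)
  show "integrable lborel (\<lambda>y'. sqrt (pi / 2) * (\<bar>y' - y\<bar> * exp (- (y' - y)\<^sup>2)))"
    by (intro integrable_mult_right integrable_gaussian_abs_moment)
  show "AE y' in lborel. norm ((y' - y) * exp (- (y - y')\<^sup>2) * (LBINT t. (half_gaussian ((y + y') / sqrt 2) t)\<^sup>2))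
      \<le> norm (sqrt (pi / 2) * (\<bar>y' - y\<bar> * exp (- (y' - y)\<^sup>2)))"
  proof (intro AE_I2)
    fix y'
    have "norm ((y' - y) * exp (- (y - y')\<^sup>2) * (LBINT t. (half_gaussian ((y + y') / sqrt 2) t)\<^sup>2)) =
        \<bar>y' - y\<bar> * exp (- (y' - y)\<^sup>2) * (LBINT t. (half_gaussian ((y + y') / sqrt 2) t)\<^sup>2)"
      using integral_half_gaussian_square_bounds(1) by (simp add: abs_mult power2_commute)
    also have "\<dots> \<le> \<bar>y' - y\<bar> * exp (- (y' - y)\<^sup>2) * sqrt (pi / 2)"
      by (intro mult_left_mono integral_half_gaussian_square_bounds(2)) simp
    finally show "norm ((y' - y) * exp (- (y - y')\<^sup>2) * (LBINT t. (half_gaussian ((y + y') / sqrt 2) t)\<^sup>2))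
        \<le> norm (sqrt (pi / 2) * (\<bar>y' - y\<bar> * exp (- (y' - y)\<^sup>2)))"
      by (simp add: abs_mult mult.commute)
  qed
qed (unfold half_gaussian_def, measurable)

lemma integral_dy'_gaussian_mult_half_gaussian_square:
  "(LBINT y'. (y' - y) * exp (- (y - y')\<^sup>2) * (half_gaussian ((y + y') / sqrt 2) t)\<^sup>2) =
    indicator {0<..} t * (sqrt pi / 2 * ((t - sqrt 2 * y) * exp (- (t - sqrt 2 * y)\<^sup>2)))"
proof (cases "0 < t")
  case True
  have "(y' - y) * exp (- (y - y')\<^sup>2) * (half_gaussian ((y + y') / sqrt 2) t)\<^sup>2 =
      exp (- (t - sqrt 2 * y)\<^sup>2) * ((y' - y) * exp (- 2 * (y' - t / sqrt 2)\<^sup>2))" for y'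
    using gaussian_exponent_swap[of y y' t] True
    by (simp add: half_gaussian_square mult_ac flip: exp_add)
  then have "(LBINT y'. (y' - y) * exp (- (y - y')\<^sup>2) * (half_gaussian ((y + y') / sqrt 2) t)\<^sup>2) =
      exp (- (t - sqrt 2 * y)\<^sup>2) * (LBINT y'. (y' - y) * exp (- 2 * (y' - t / sqrt 2)\<^sup>2))"
    by (simp only: integral_mult_right_zero)
  also have "(LBINT y'. (y' - y) * exp (- 2 * (y' - t / sqrt 2)\<^sup>2)) = sqrt (pi / 2) * (t / sqrt 2 - y)"
    by (rule integral_gaussian_first_moment) simp
  also have "sqrt (pi / 2) * (t / sqrt 2 - y) = sqrt pi / 2 * (t - sqrt 2 * y)"
    by (simp add: real_sqrt_divide field_simps)
  finally show ?thesis
    using True by (simp add: mult_ac)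
qed (simp add: half_gaussian_def)

lemma integral_dy'_half_gaussian_square:
  "(LBINT y'. (y' - y) * exp (- (y - y')\<^sup>2) * (LBINT t. (half_gaussian ((y + y') / sqrt 2) t)\<^sup>2)) =
    sqrt pi / 4 * exp (- 2 * y\<^sup>2)"
proof -
  define F where "F y' t = (y' - y) * exp (- (y - y')\<^sup>2) * (half_gaussian ((y + y') / sqrt 2) t)\<^sup>2"
    for y' t :: real
  have "(LBINT y'. LBINT t. F y' t) = (LBINT t. LBINT y'. F y' t)"
  proof (rule lborel_pair.Fubini_integral_iterated)
    have "integrable lborel (F y')" for y'
      unfolding F_def
      by (intro integrable_mult_right Bochner_Integration.integrable_bound[OF integrable_gaussian[of 2 "(y + y') / sqrt 2"]])
        (auto simp: half_gaussian_square indicator_def)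
    then show "AE y' in lborel. integrable lborel (F y')"
      by simp
    have "(LBINT t. norm (F y' t)) =
        norm ((y' - y) * exp (- (y - y')\<^sup>2) * (LBINT t. (half_gaussian ((y + y') / sqrt 2) t)\<^sup>2))" for y'
      using integral_half_gaussian_square_bounds(1)[of "(y + y') / sqrt 2"] by (simp add: F_def abs_mult)
    then show "integrable lborel (\<lambda>y'. LBINT t. norm (F y' t))"
      using integrable_norm[OF integrable_dy'_half_gaussian_square[of y]] by simp
  qed (unfold F_def half_gaussian_def, measurable)
  also have "\<dots> = sqrt pi / 2 * (LBINT t:{0<..}. (t - sqrt 2 * y) * exp (- (t - sqrt 2 * y)\<^sup>2))"
    unfolding F_def integral_dy'_gaussian_mult_half_gaussian_square set_lebesgue_integral_def by (simp add: mult_ac)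
  also have "\<dots> = sqrt pi / 4 * exp (- 2 * y\<^sup>2)"
    by (simp add: integral_half_line_gaussian_moment power_mult_distrib)
  finally show ?thesis
    by (simp add: F_def)
qed

lemma integral_dy'_rhoT:
  shows "integrable lborel (\<lambda>y'. (y' - y) * (LBINT x. rhoT (0, y) (x, y')))"
    and "(LBINT y'. (y' - y) * (LBINT x. rhoT (0, y) (x, y'))) = - (sqrt 2 * sqrt pi / (4 * pi\<^sup>2)) * exp (- 2 * y\<^sup>2)"
proof -
  have eq: "(y' - y) * (LBINT x. rhoT (0, y) (x, y')) = - (sqrt 2 / pi\<^sup>2) *
      ((y' - y) * exp (- (y - y')\<^sup>2) * (LBINT t. (half_gaussian ((y + y') / sqrt 2) t)\<^sup>2))" for y'
    unfolding integral_rhoT_dx(2) by (simp add: mult_ac)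
  show "integrable lborel (\<lambda>y'. (y' - y) * (LBINT x. rhoT (0, y) (x, y')))"
    unfolding eq by (intro integrable_mult_right integrable_dy'_half_gaussian_square)
  have "(LBINT y'. (y' - y) * (LBINT x. rhoT (0, y) (x, y'))) = - (sqrt 2 / pi\<^sup>2) * (sqrt pi / 4 * exp (- 2 * y\<^sup>2))"
    unfolding eq integral_mult_right_zero integral_dy'_half_gaussian_square ..
  then show "(LBINT y'. (y' - y) * (LBINT x. rhoT (0, y) (x, y'))) = - (sqrt 2 * sqrt pi / (4 * pi\<^sup>2)) * exp (- 2 * y\<^sup>2)"
    by simp
qed

theorem mainTheorem3:
  fixes \<beta> :: real
  assumes "\<beta> = 2"
  shows "(\<forall>y y'. integrable lborel (\<lambda>x'. rhoT (0, y) (x', y'))) \<and>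
         (\<forall>y. integrable lborel
                 (\<lambda>y'. (y' - y) * (LINT x'|lborel. rhoT (0, y) (x', y')))) \<and>
         integrable lborel
           (\<lambda>y. LINT y'|lborel. (y' - y) * (LINT x'|lborel. rhoT (0, y) (x', y'))) \<and>
         - 2 * pi * \<beta> *
           (LINT y|lborel. LINT y'|lborel. (y' - y) * (LINT x'|lborel. rhoT (0, y) (x', y'))) = 1"
proof (intro conjI allI)
  show "integrable lborel (\<lambda>x'. rhoT (0, y) (x', y'))" for y y'
    by (rule integral_rhoT_dx(1))
  show "integrable lborel (\<lambda>y'. (y' - y) * (LINT x'|lborel. rhoT (0, y) (x', y')))" for y
    by (rule integral_dy'_rhoT(1))
  show "integrable lborel (\<lambda>y. LINT y'|lborel. (y' - y) * (LINT x'|lborel. rhoT (0, y) (x', y')))"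
    unfolding integral_dy'_rhoT(2) using integrable_gaussian[of 2 0] by simp
  have "(LINT y|lborel. LINT y'|lborel. (y' - y) * (LINT x'|lborel. rhoT (0, y) (x', y'))) =
      - (sqrt 2 * sqrt pi / (4 * pi\<^sup>2)) * sqrt (pi / 2)"
    unfolding integral_dy'_rhoT(2) using integral_gaussian[of 2 0] by simp
  also have "\<dots> = - 1 / (4 * pi)"
    by (simp add: real_sqrt_divide power2_eq_square)
  finally show "- 2 * pi * \<beta> *
      (LINT y|lborel. LINT y'|lborel. (y' - y) * (LINT x'|lborel. rhoT (0, y) (x', y'))) = 1"
    using assms by simp
qed

end
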